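(* Let $n\ge2$ and let $G$ be a finite simple graph with independence number $n$. Let $P_G(z)=I_G(z)-1$. If the Julia set $\mathcal{J}(P_G)$ (the independence fractal of $G$) is a circle, then $G=K_n^c$ (the graph on $n$ vertices with no edges) and the circle is $\{z\in\mathbb{C}: |z+1|=1\}$.
   Context: For a finite simple graph $G$, the independence polynomial is $I_G(z)=\sum_{i=0}^{\alpha} a_i z^i$, where $a_i$ is the number of sets of $i$ pairwise non-adjacent vertices and the independence number $\alpha$ is the largest such $i$. $P_G=I_G-1$ is the reduced independence polynomial. For a polynomial $P$ of degree at least two, the Julia set $\mathcal{J}(P)$ is the boundary of $\{z: (P^n(z))_{n>0}\text{ bounded}\}$. For $G\neq K_1$ the independence fractal $\mathcal{F}(G)$ of $G$ equals $\mathcal{J}(P_G)$. *)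

theory Defs
  imports "HOL-Analysis.Analysis" "HOL-Computational_Algebra.Polynomial"
begin

text \<open>A finite simple graph: finite vertex set V and a symmetric irreflexive
  adjacency relation E (only its restriction to V matters).\<close>
definition simple_graph :: "'a set \<Rightarrow> ('a \<Rightarrow> 'a \<Rightarrow> bool) \<Rightarrow> bool" where
  "simple_graph V E \<longleftrightarrow> finite V \<and> (\<forall>u v. E u v \<longrightarrow> E v u) \<and> (\<forall>v. \<not> E v v)"

definition independent_set :: "'a set \<Rightarrow> ('a \<Rightarrow> 'a \<Rightarrow> bool) \<Rightarrow> 'a set \<Rightarrow> bool" where
  "independent_set V E S \<longleftrightarrow> S \<subseteq> V \<and> (\<forall>u\<in>S. \<forall>v\<in>S. \<not> E u v)"

definition indep_count :: "'a set \<Rightarrow> ('a \<Rightarrow> 'a \<Rightarrow> bool) \<Rightarrow> nat \<Rightarrow> nat" where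
  "indep_count V E i = card {S. independent_set V E S \<and> card S = i}"

definition independence_number :: "'a set \<Rightarrow> ('a \<Rightarrow> 'a \<Rightarrow> bool) \<Rightarrow> nat" where
  "independence_number V E = Max {card S | S. independent_set V E S}"

definition indep_poly :: "'a set \<Rightarrow> ('a \<Rightarrow> 'a \<Rightarrow> bool) \<Rightarrow> complex poly" where
  "indep_poly V E = (\<Sum>i\<le>independence_number V E. monom (of_nat (indep_count V E i)) i)"

definition reduced_indep_poly :: "'a set \<Rightarrow> ('a \<Rightarrow> 'a \<Rightarrow> bool) \<Rightarrow> complex poly" where
  "reduced_indep_poly V E = indep_poly V E - 1"

definition filled_julia :: "complex poly \<Rightarrow> complex set" where
  "filled_julia P = {z. bounded (range (\<lambda>n. (poly P ^^ n) z))}"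

definition julia_set :: "complex poly \<Rightarrow> complex set" where
  "julia_set P = frontier (filled_julia P)"

end

theory Submission
  imports Defs
begin

(* The Julia set of a polynomial P is forward invariant, so if it is the circle |z - c| = r,
   then P maps that circle into itself. A polynomial mapping the unit circle into itself is a
   unimodular monomial, so after an affine change of variable P(z) = c + kappa (z - c)^n.
   Comparing coefficients with P_G = I_G - 1: the constant term gives kappa (-c)^(n-1) = 1
   (note -c <> 0 because a_(n-1) > 0), hence the linear coefficient a_1 = |V| equals n.
   An independent set of size n = |V| is all of V, so G is edgeless and P_G = (1 + z)^n - 1,
   which forces kappa = 1 and c = -1, and then r = 1. *)

lemma coeff_linear_poly_power:
  fixes a :: "'a::comm_ring_1"
  shows "coeff ([:a, 1:] ^ n) k = (if k \<le> n then of_nat (n choose k) * a ^ (n - k) else 0)"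
proof -
  have "[:a, 1:] ^ n = (monom 1 1 + [:a:]) ^ n"
    by (simp add: monom_altdef)
  also have "\<dots> = (\<Sum>j\<le>n. monom (a ^ (n - j) * of_nat (n choose j)) j)"
    by (simp add: binomial_ring monom_power of_nat_poly poly_const_pow smult_monom
        mult.commute[of _ "[:_:]"])
  finally show ?thesis
    by (simp add: coeff_sum)
qed

lemma coeff_eq_if_poly_centered_power:
  fixes p :: "'a::{comm_ring_1, ring_no_zero_divisors, ring_char_0} poly"
  assumes "\<And>z. poly p z = c + \<kappa> * (z - c) ^ n"
  shows "coeff p k = (if k = 0 then c else 0)
           + (if k \<le> n then \<kappa> * of_nat (n choose k) * (- c) ^ (n - k) else 0)"
proof -
  have "p = [:c:] + smult \<kappa> ([:- c, 1:] ^ n)"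
    by (rule poly_eq_poly_eq_iff[THEN iffD1]) (auto simp: assms)
  then show ?thesis
    by (simp add: coeff_linear_poly_power coeff_pCons split: nat.split)
qed

lemma binomial_minus_one_eq_centered_power:
  fixes c \<kappa> :: complex
  assumes "n \<ge> 2" and centered: "\<And>z. poly ([:1, 1:] ^ n - 1) z = c + \<kappa> * (z - c) ^ n"
  shows "c = -1 \<and> \<kappa> = 1"
proof -
  obtain m where n: "n = Suc m" and "m > 0"
    using assms(1) by (cases n) auto
  have "coeff ([:1, 1:] ^ n - 1 :: complex poly) k = of_nat (n choose k) - (if k = 0 then 1 else 0)"
    for k
    by (simp add: coeff_linear_poly_power binomial_eq_0)
  note coeffs = coeff_eq_if_poly_centered_power[OF centered, unfolded this]
  have "\<kappa> = 1"
    using coeffs[of n] by (simp add: n)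
  moreover have "of_nat n * 1 = of_nat n * (- c)"
    using coeffs[of m] \<open>\<kappa> = 1\<close> \<open>m > 0\<close> by (simp add: n)
  then have "- c = 1"
    by (metis mult_cancel_left of_nat_eq_0_iff n nat.distinct(1))
  ultimately show ?thesis
    by (metis minus_minus)
qed

lemma power_eq_self_imp_eq_1:
  fixes r :: real
  assumes "r > 0" and "n \<noteq> 1" and "r ^ n = r"
  shows "r = 1"
proof (cases n)
  case (Suc m)
  with assms have "r ^ m = 1" and "m \<noteq> 0"
    by auto
  then show ?thesis
    using power_eq_1_iff[of r m] \<open>r > 0\<close> by auto
qed (use assms in simp)

lemma infinite_sphere_complex:
  fixes c :: complex
  assumes "r > 0"
  shows "infinite (sphere c r)"
proof -
  have "uncountable (sphere c r)"
    using assms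
    by (intro connected_uncountable[of _ "c + of_real r" "c - of_real r"])
       (auto simp: connected_sphere dist_norm)
  then show ?thesis
    using countable_finite by blast
qed

lemma poly_unit_circle_imp_monom:
  fixes Q :: "complex poly"
  assumes unimodular: "\<And>u. norm u = 1 \<Longrightarrow> norm (poly Q u) = 1"
  shows "\<exists>l. Q = monom l (degree Q) \<and> norm l = 1"
proof -
  define n where "n = degree Q"
  \<comment> \<open>On the unit circle cnj u = inverse u, so Q' u = u ^ n * cnj (poly Q u) and Q * Q'
      agrees with the monomial z ^ n there.\<close>
  define Q' where "Q' = reflect_poly (map_poly cnj Q)"
  have roots: "sphere 0 1 \<subseteq> {u. poly (Q * Q' - monom 1 n) u = 0}"
  proof
    fix u :: complex
    assume "u \<in> sphere 0 1"
    have "norm u = 1"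
      using \<open>u \<in> sphere 0 1\<close> by simp
    then have "u * cnj u = 1" and "poly Q u * cnj (poly Q u) = 1"
      using unimodular complex_norm_square[of u] complex_norm_square[of "poly Q u"]
      by simp_all
    moreover from this have "u \<noteq> 0" "inverse (cnj u) = u"
      by (fastforce, metis inverse_unique mult.commute)
    then have "poly Q' u = u ^ n * cnj (poly Q u)"
      by (simp add: Q'_def n_def poly_reflect_poly_nz degree_map_poly)
    ultimately show "u \<in> {u. poly (Q * Q' - monom 1 n) u = 0}"
      by (simp add: poly_monom algebra_simps)
  qed
  have QQ': "Q * Q' = monom 1 n"
    using finite_subset[OF roots poly_roots_finite] infinite_sphere_complex[OF zero_less_one]
    by auto
  then have "Q \<noteq> 0" "Q' \<noteq> 0"
    by auto
  then have "degree Q' = 0"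
    using degree_mult_eq[of Q Q'] QQ' by (simp add: n_def degree_monom_eq)
  then obtain m where "Q' = [:m:]"
    by (metis degree_eq_zeroE)
  with QQ' have "smult m Q = monom 1 n"
    by (simp add: mult.commute)
  then have "m \<noteq> 0"
    by auto
  have "Q = smult (1 / m) (smult m Q)"
    using \<open>m \<noteq> 0\<close> by simp
  also have "\<dots> = monom (1 / m) n"
    using \<open>smult m Q = monom 1 n\<close> by (simp add: smult_monom)
  finally have "Q = monom (1 / m) n" .
  moreover have "norm (1 / m) = 1"
    using unimodular[of 1] \<open>Q = monom (1 / m) n\<close> by (simp add: poly_monom)
  ultimately show ?thesis
    unfolding n_def[symmetric] by blast
qed

lemma poly_image_sphere_subset_imp_centered_power:
  fixes P :: "complex poly"
  assumes "r > 0" and maps_to: "poly P ` sphere c r \<subseteq> sphere c r"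
  shows "\<exists>\<kappa>. (\<forall>z. poly P z = c + \<kappa> * (z - c) ^ degree P) \<and> norm \<kappa> * r ^ degree P = r"
proof -
  define \<rho> where "\<rho> = complex_of_real r"
  have "\<rho> \<noteq> 0"
    using \<open>r > 0\<close> by (simp add: \<rho>_def)
  define Q where "Q = smult (1 / \<rho>) (pcompose (P - [:c:]) [:c, \<rho>:])"
  have poly_Q: "poly Q u = (poly P (c + \<rho> * u) - c) / \<rho>" for u
    by (simp add: Q_def poly_pcompose mult.commute)
  have "degree (P - [:c:]) = degree P"
    using degree_diff_le[of P 0 "[:c:]"] degree_add_eq_left[of "- [:c:]" P]
    by (cases "degree P = 0") (auto simp: diff_conv_add_uminus)
  then have "degree Q = degree P"
    using \<open>\<rho> \<noteq> 0\<close> by (simp add: Q_def degree_pcompose)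
  moreover have "norm (poly Q u) = 1" if "norm u = 1" for u
  proof -
    have "c + \<rho> * u \<in> sphere c r"
      using that \<open>r > 0\<close> by (simp add: \<rho>_def dist_norm norm_mult)
    then have "poly P (c + \<rho> * u) \<in> sphere c r"
      using maps_to by blast
    then have "norm (poly P (c + \<rho> * u) - c) = r"
      by (simp add: dist_norm norm_minus_commute)
    then show ?thesis
      using \<open>r > 0\<close> by (simp add: poly_Q norm_divide \<rho>_def)
  qed
  ultimately obtain l where Q: "Q = monom l (degree P)" and "norm l = 1"
    using poly_unit_circle_imp_monom by metis
  define \<kappa> where "\<kappa> = \<rho> * l / \<rho> ^ degree P"
  have "poly P z = c + \<kappa> * (z - c) ^ degree P" for z
  proof -
    have "poly P z = c + \<rho> * poly Q ((z - c) / \<rho>)"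
      using \<open>\<rho> \<noteq> 0\<close> by (simp add: poly_Q)
    also have "\<dots> = c + \<kappa> * (z - c) ^ degree P"
      by (simp add: Q poly_monom \<kappa>_def power_divide)
    finally show ?thesis .
  qed
  moreover have "norm \<kappa> * r ^ degree P = r"
    using \<open>norm l = 1\<close> \<open>r > 0\<close> by (simp add: \<kappa>_def \<rho>_def norm_divide norm_mult norm_power)
  ultimately show ?thesis
    by blast
qed

lemma poly_in_filled_julia_iff: "poly P z \<in> filled_julia P \<longleftrightarrow> z \<in> filled_julia P"
proof -
  have "range (\<lambda>k. (poly P ^^ k) z) = insert z (range (\<lambda>k. (poly P ^^ Suc k) z))"
    by (subst UNIV_nat_eq) (simp add: image_comp)
  also have "(\<lambda>k. (poly P ^^ Suc k) z) = (\<lambda>k. (poly P ^^ k) (poly P z))"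
    by (simp add: funpow_Suc_right del: funpow.simps)
  finally show ?thesis
    by (simp add: filled_julia_def)
qed

lemma image_julia_set_subset: "poly P ` julia_set P \<subseteq> julia_set P"
proof -
  let ?K = "filled_julia P"
  have cont: "continuous_on A (poly P)" for A
    by (intro continuous_intros)
  have K: "poly P ` ?K \<subseteq> ?K" and co_K: "poly P ` (- ?K) \<subseteq> - ?K"
    by (auto simp: poly_in_filled_julia_iff)
  have "poly P ` julia_set P \<subseteq> poly P ` closure ?K \<inter> poly P ` closure (- ?K)"
    unfolding julia_set_def frontier_closures by (rule image_Int_subset)
  also have "\<dots> \<subseteq> closure ?K \<inter> closure (- ?K)"
    using image_closure_subset[OF cont closed_closure order_trans[OF K closure_subset]]
      image_closure_subset[OF cont closed_closure order_trans[OF co_K closure_subset]]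
    by (rule Int_mono)
  finally show ?thesis
    unfolding julia_set_def frontier_closures .
qed

lemma finite_independent_sets: "simple_graph V E \<Longrightarrow> finite {S. independent_set V E S}"
  by (rule finite_subset[of _ "Pow V"]) (auto simp: simple_graph_def independent_set_def)

lemma independence_number_attained:
  assumes "simple_graph V E"
  shows "\<exists>S. independent_set V E S \<and> card S = independence_number V E"
proof -
  have "finite {card S | S. independent_set V E S}"
    using finite_independent_sets[OF assms] by (simp add: setcompr_eq_image)
  moreover have "independent_set V E {}"
    by (simp add: independent_set_def)
  ultimately have "independence_number V E \<in> {card S | S. independent_set V E S}"
    unfolding independence_number_def by (intro Max_in) auto
  then show ?thesis
    by auto
qed

lemma indep_count_0: "simple_graph V E \<Longrightarrow> indep_count V E 0 = 1"
proof -
  assume "simple_graph V E"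
  then have "{S. independent_set V E S \<and> card S = 0} = {{}}"
    by (auto simp: independent_set_def simple_graph_def dest: finite_subset)
  then show ?thesis
    by (simp add: indep_count_def)
qed

lemma indep_count_1: "simple_graph V E \<Longrightarrow> indep_count V E 1 = card V"
proof -
  assume "simple_graph V E"
  then have "{S. independent_set V E S \<and> card S = 1} = (\<lambda>v. {v}) ` V"
    by (auto simp: independent_set_def simple_graph_def card_1_singleton_iff)
  then show ?thesis
    by (simp add: indep_count_def card_image)
qed

lemma indep_count_pos:
  assumes "simple_graph V E" and "i \<le> independence_number V E"
  shows "indep_count V E i > 0"
proof -
  obtain S where "independent_set V E S" "card S = independence_number V E"
    using independence_number_attained[OF assms(1)] by blast
  moreover obtain T where "T \<subseteq> S" "card T = i"
    using obtain_subset_with_card_n assms(2) calculation by metis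
  ultimately have "T \<in> {S. independent_set V E S \<and> card S = i}"
    by (auto simp: independent_set_def)
  then show ?thesis
    using finite_independent_sets[OF assms(1)]
    by (auto simp: indep_count_def card_gt_0_iff)
qed

lemma coeff_reduced_indep_poly:
  assumes "simple_graph V E"
  shows "coeff (reduced_indep_poly V E) k =
           (if 0 < k \<and> k \<le> independence_number V E then of_nat (indep_count V E k) else 0)"
  using indep_count_0[OF assms]
  by (simp add: reduced_indep_poly_def indep_poly_def coeff_sum)

lemma degree_reduced_indep_poly:
  assumes "simple_graph V E" and "independence_number V E > 0"
  shows "degree (reduced_indep_poly V E) = independence_number V E"
proof (rule antisym)
  show "degree (reduced_indep_poly V E) \<le> independence_number V E"
    by (rule degree_le) (simp add: coeff_reduced_indep_poly[OF assms(1)])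
  show "independence_number V E \<le> degree (reduced_indep_poly V E)"
    using indep_count_pos[OF assms(1) order_refl] assms
    by (intro le_degree) (simp add: coeff_reduced_indep_poly)
qed

lemma edgeless_if_independence_number_eq_card:
  assumes "simple_graph V E" and "independence_number V E = card V"
  shows "\<forall>u\<in>V. \<forall>v\<in>V. \<not> E u v"
proof -
  obtain S where "independent_set V E S" "card S = card V"
    using independence_number_attained[OF assms(1)] assms(2) by auto
  moreover have "finite V"
    using assms(1) by (simp add: simple_graph_def)
  ultimately have "independent_set V E V"
    by (metis card_subset_eq independent_set_def)
  then show ?thesis
    by (simp add: independent_set_def)
qed

lemma reduced_indep_poly_edgeless:
  assumes "simple_graph V E" and edgeless: "\<forall>u\<in>V. \<forall>v\<in>V. \<not> E u v"
  shows "reduced_indep_poly V E = [:1, 1:] ^ card V - 1"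
proof -
  have "finite V"
    using assms(1) by (simp add: simple_graph_def)
  have independent_iff: "independent_set V E S \<longleftrightarrow> S \<subseteq> V" for S
    using edgeless by (auto simp: independent_set_def)
  have "indep_count V E k = card V choose k" for k
    using n_subsets[OF \<open>finite V\<close>] by (simp add: indep_count_def independent_iff)
  moreover have "independence_number V E = card V"
    unfolding independence_number_def independent_iff
    using \<open>finite V\<close> by (intro Max_eqI) (auto intro: card_mono)
  ultimately show ?thesis
    by (intro poly_eqI)
       (simp add: reduced_indep_poly_def indep_poly_def coeff_sum coeff_linear_poly_power)
qed

lemma card_eq_if_reduced_indep_poly_centered_power:
  assumes "simple_graph V E" and \<alpha>: "independence_number V E = n" "n \<ge> 2"
    and centered: "\<And>z. poly (reduced_indep_poly V E) z = c + \<kappa> * (z - c) ^ n"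
  shows "card V = n"
proof -
  define t where "t = - c"
  have count: "of_nat (indep_count V E k) = \<kappa> * of_nat (n choose k) * t ^ (n - k)"
    if "0 < k" "k \<le> n" for k
    using coeff_eq_if_poly_centered_power[OF centered, of k] that
    by (simp add: coeff_reduced_indep_poly[OF assms(1)] \<alpha> t_def)
  have "t = \<kappa> * t ^ n"
    using coeff_eq_if_poly_centered_power[OF centered, of 0]
    by (simp add: coeff_reduced_indep_poly[OF assms(1)] t_def neg_eq_iff_add_eq_0)
  also have "\<dots> = t * (\<kappa> * t ^ (n - 1))"
    using \<alpha> by (simp add: power_eq_if)
  finally have "t = 0 \<or> \<kappa> * t ^ (n - 1) = 1"
    by auto
  moreover have "t \<noteq> 0"
    using count[of "n - 1"] indep_count_pos[OF assms(1), of "n - 1"] \<alpha> by auto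
  ultimately have "of_nat (indep_count V E 1) = (of_nat n :: complex)"
    using count[of 1] \<alpha> by (simp add: mult.commute mult.left_commute)
  then show ?thesis
    using indep_count_1[OF assms(1)] by (metis of_nat_eq_iff)
qed

theorem lemma3p2:
  fixes V :: "'a set" and E :: "'a \<Rightarrow> 'a \<Rightarrow> bool" and n :: nat
  assumes "simple_graph V E"
    and "n \<ge> 2"
    and "independence_number V E = n"
    and "\<exists>c r. r > 0 \<and> julia_set (reduced_indep_poly V E) = sphere c r"
  shows "card V = n \<and> (\<forall>u\<in>V. \<forall>v\<in>V. \<not> E u v)
         \<and> julia_set (reduced_indep_poly V E) = sphere (-1) 1"
proof -
  let ?P = "reduced_indep_poly V E"
  obtain c r where "r > 0" and J: "julia_set ?P = sphere c r"
    using assms(4) by blast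
  have "degree ?P = n"
    using degree_reduced_indep_poly[OF assms(1)] assms(2,3) by simp
  moreover have "poly ?P ` sphere c r \<subseteq> sphere c r"
    using image_julia_set_subset[of ?P] J by simp
  ultimately obtain \<kappa> where centered: "\<And>z. poly ?P z = c + \<kappa> * (z - c) ^ n"
    and radius: "norm \<kappa> * r ^ n = r"
    using poly_image_sphere_subset_imp_centered_power[OF \<open>r > 0\<close>] by metis
  have "card V = n"
    using card_eq_if_reduced_indep_poly_centered_power[OF assms(1,3,2) centered] .
  then have edgeless: "\<forall>u\<in>V. \<forall>v\<in>V. \<not> E u v"
    using edgeless_if_independence_number_eq_card[OF assms(1)] assms(3) by simp
  then have "c = -1 \<and> \<kappa> = 1"
    using binomial_minus_one_eq_centered_power[OF assms(2)] centered \<open>card V = n\<close>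
    by (simp add: reduced_indep_poly_edgeless[OF assms(1)])
  moreover from this have "r = 1"
    using power_eq_self_imp_eq_1[OF \<open>r > 0\<close>, of n] radius assms(2) by simp
  ultimately show ?thesis
    using J \<open>card V = n\<close> edgeless by simp
qed

end
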